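(* Consider a finite reward-free MDP with occupancy polytope $\Phi$, let $d_e^\star\in\Phi$, $\delta\ge0$, and let $\mathcal D=\{(d_e^k,\epsilon^k)\}_{k=1}^K$ with $d_e^k\in\Phi$, $\epsilon^k\ge0$. Let $\tilde r$ be a reward with $\mathrm{subopt}(\tilde r,d_e^\star)>\delta$. Suppose there exist $r'\in\mathcal R(d_e^\star)$ and $k\in[K]$ such that \[(\tilde r-r')^\top(d_e^\star-d_e^k)\ge0\quad\text{and}\quad\mathrm{subopt}(r',d_e^k)\in[\epsilon^k-\delta,\epsilon^k].\] Then $\mathrm{subopt}(\tilde r,d_e^k)>\epsilon^k$.
   Context: The MDP has finite $S$, $A$, transitions $P$, initial distribution $\mu_0$, discount $\gamma\in(0,1)$; $(Md)(s)=\sum_a d(s,a)-\gamma\sum_{s',a'}P(s\mid s',a')d(s',a')$ and $\Phi=\{d\ge0:Md=(1-\gamma)\mu_0\}$. Rewards are $r\in\Delta(S\times A)$. $\mathrm{subopt}(r,d):=\max_{\tilde d\in\Phi}r^\top\tilde d-r^\top d$; $\mathcal R(d_e^\star):=\{r\in\Delta(S\times A):\mathrm{subopt}(r,d_e^\star)=0\}$. *)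

theory Defs
  imports "HOL-Analysis.Analysis"
begin

text \<open>Finite MDP: states 's, actions 'a (finite types). P s' a s is the probability of
moving to s from s' under action a. Occupancy measures / rewards are functions on 's \<times> 'a.\<close>

definition is_mdp :: "('s::finite \<Rightarrow> 'a::finite \<Rightarrow> 's \<Rightarrow> real) \<Rightarrow> ('s \<Rightarrow> real) \<Rightarrow> real \<Rightarrow> bool" where
  "is_mdp P mu0 \<gamma> \<longleftrightarrow> (\<forall>s' a s. P s' a s \<ge> 0) \<and> (\<forall>s' a. (\<Sum>s\<in>UNIV. P s' a s) = 1)
     \<and> (\<forall>s. mu0 s \<ge> 0) \<and> (\<Sum>s\<in>UNIV. mu0 s) = 1 \<and> 0 < \<gamma> \<and> \<gamma> < 1"

definition flowM :: "('s::finite \<Rightarrow> 'a::finite \<Rightarrow> 's \<Rightarrow> real) \<Rightarrow> real \<Rightarrow> ('s \<times> 'a \<Rightarrow> real) \<Rightarrow> 's \<Rightarrow> real" where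
  "flowM P \<gamma> d s = (\<Sum>a\<in>UNIV. d (s, a)) - \<gamma> * (\<Sum>s'\<in>UNIV. \<Sum>a'\<in>UNIV. P s' a' s * d (s', a'))"

definition occ_polytope :: "('s::finite \<Rightarrow> 'a::finite \<Rightarrow> 's \<Rightarrow> real) \<Rightarrow> ('s \<Rightarrow> real) \<Rightarrow> real \<Rightarrow> ('s \<times> 'a \<Rightarrow> real) set" where
  "occ_polytope P mu0 \<gamma> = {d. (\<forall>x. d x \<ge> 0) \<and> (\<forall>s. flowM P \<gamma> d s = (1 - \<gamma>) * mu0 s)}"

definition inner_sa :: "('s::finite \<times> 'a::finite \<Rightarrow> real) \<Rightarrow> ('s \<times> 'a \<Rightarrow> real) \<Rightarrow> real" where
  "inner_sa r d = (\<Sum>x\<in>UNIV. r x * d x)"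

definition is_reward :: "('s::finite \<times> 'a::finite \<Rightarrow> real) \<Rightarrow> bool" where
  "is_reward r \<longleftrightarrow> (\<forall>x. r x \<ge> 0) \<and> (\<Sum>x\<in>UNIV. r x) = 1"

definition subopt :: "('s::finite \<Rightarrow> 'a::finite \<Rightarrow> 's \<Rightarrow> real) \<Rightarrow> ('s \<Rightarrow> real) \<Rightarrow> real
     \<Rightarrow> ('s \<times> 'a \<Rightarrow> real) \<Rightarrow> ('s \<times> 'a \<Rightarrow> real) \<Rightarrow> real" where
  "subopt P mu0 \<gamma> r d = (SUP d'\<in>occ_polytope P mu0 \<gamma>. inner_sa r d') - inner_sa r d"

definition feasible_rewards :: "('s::finite \<Rightarrow> 'a::finite \<Rightarrow> 's \<Rightarrow> real) \<Rightarrow> ('s \<Rightarrow> real) \<Rightarrow> real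
     \<Rightarrow> ('s \<times> 'a \<Rightarrow> real) \<Rightarrow> ('s \<times> 'a \<Rightarrow> real) set" where
  "feasible_rewards P mu0 \<gamma> de = {r. is_reward r \<and> subopt P mu0 \<gamma> r de = 0}"

end

theory Submission
  imports Defs
begin

(* Moving the evaluated occupancy measure changes the suboptimality of a fixed reward only
   through the linear term, since the optimal value cancels. Hence
   subopt(rt, dk) - subopt(rt, de) = rt^T (de - dk) >= r'^T (de - dk) = subopt(r', dk) - subopt(r', de),
   and the right-hand side is at least eps k - delta because r' is optimal for de. *)

lemma inner_sa_diff_left:
  "inner_sa (\<lambda>x. r x - r' x) d = inner_sa r d - inner_sa r' d"
  unfolding inner_sa_def by (simp add: left_diff_distrib sum_subtractf)

lemma inner_sa_diff_right:
  "inner_sa r (\<lambda>x. d x - d' x) = inner_sa r d - inner_sa r d'"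
  unfolding inner_sa_def by (simp add: right_diff_distrib sum_subtractf)

lemma subopt_diff:
  "subopt P mu0 \<gamma> r d' - subopt P mu0 \<gamma> r d = inner_sa r (\<lambda>x. d x - d' x)"
  unfolding subopt_def inner_sa_diff_right by simp

theorem mainTheorem8:
  fixes P :: "'s::finite \<Rightarrow> 'a::finite \<Rightarrow> 's \<Rightarrow> real" and mu0 :: "'s \<Rightarrow> real" and \<gamma> :: real
    and de :: "'s \<times> 'a \<Rightarrow> real" and \<delta> :: real and K :: nat
    and dk :: "nat \<Rightarrow> 's \<times> 'a \<Rightarrow> real" and eps :: "nat \<Rightarrow> real"
    and rt r' :: "'s \<times> 'a \<Rightarrow> real" and k :: nat
  assumes "is_mdp P mu0 \<gamma>"
    and "de \<in> occ_polytope P mu0 \<gamma>"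
    and "\<delta> \<ge> 0"
    and "\<forall>j\<in>{1..K}. dk j \<in> occ_polytope P mu0 \<gamma> \<and> eps j \<ge> 0"
    and "is_reward rt"
    and "subopt P mu0 \<gamma> rt de > \<delta>"
    and "r' \<in> feasible_rewards P mu0 \<gamma> de"
    and "k \<in> {1..K}"
    and "inner_sa (\<lambda>x. rt x - r' x) (\<lambda>x. de x - dk k x) \<ge> 0"
    and "eps k - \<delta> \<le> subopt P mu0 \<gamma> r' (dk k)"
    and "subopt P mu0 \<gamma> r' (dk k) \<le> eps k"
  shows "subopt P mu0 \<gamma> rt (dk k) > eps k"
proof -
  let ?gap = "\<lambda>r. inner_sa r (\<lambda>x. de x - dk k x)"
  have r'_optimal: "subopt P mu0 \<gamma> r' de = 0"
    using assms(7) by (simp add: feasible_rewards_def)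
  have "eps k - \<delta> \<le> subopt P mu0 \<gamma> r' (dk k) - subopt P mu0 \<gamma> r' de"
    using assms(10) r'_optimal by simp
  also have "\<dots> = ?gap r'"
    by (rule subopt_diff)
  also have "\<dots> \<le> ?gap rt"
    using assms(9) by (simp add: inner_sa_diff_left)
  also have "\<dots> = subopt P mu0 \<gamma> rt (dk k) - subopt P mu0 \<gamma> rt de"
    by (rule subopt_diff[symmetric])
  finally show ?thesis
    using assms(6) by linarith
qed

end
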